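(* Let $n\ge 2$. The monoid homomorphism $VSB_n\to VSG_n$ sending each generator $\sigma_i,\sigma_i^{-1},v_i,\tau_i$ ($1\le i\le n-1$) of $VSB_n$ to the element of $VSG_n$ with the same name (with $\sigma_i^{-1}$ sent to the group inverse of $\sigma_i$) is injective. That is, the virtual singular braid monoid $VSB_n$ embeds in the virtual singular braid group $VSG_n$.
   Context: Let $n\ge 2$. The virtual singular braid monoid $VSB_n$ is the monoid generated by $\sigma_i,\sigma_i^{-1},v_i,\tau_i$ ($1\le i\le n-1$) subject to the relations: $\sigma_i\sigma_i^{-1}=\sigma_i^{-1}\sigma_i=1$; $v_i^2=1$; $\sigma_i\tau_i=\tau_i\sigma_i$; for $|i-j|=1$: $\sigma_i\sigma_j\sigma_i=\sigma_j\sigma_i\sigma_j$, $v_iv_jv_i=v_jv_iv_j$, $v_i\sigma_jv_i=v_j\sigma_iv_j$, $v_i\tau_jv_i=v_j\tau_iv_j$, $\sigma_i\sigma_j\tau_i=\tau_j\sigma_i\sigma_j$; and for $|i-j|>1$: $g_ih_j=h_jg_i$ for all $g_i,h_i\in\{\sigma_i,\tau_i,v_i\}$. The virtual singular braid group $VSG_n$ is the group generated by $\sigma_i,v_i,\tau_i$ ($1\le i\le n-1$) subject to the same relations (regarded as group relations); equivalently, it is obtained from $VSB_n$ by adjoining elements $\bar\tau_i$ with $\tau_i\bar\tau_i=\bar\tau_i\tau_i=1$ and the relations obtained by replacing $\tau_i$ by $\bar\tau_i$ in each relation involving $\tau_i$. We write $\bar\tau_i=\tau_i^{-1}$. *)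

theory Defs
  imports Main
begin

inductive pres_eq :: "('a list \<times> 'a list) set \<Rightarrow> 'a set \<Rightarrow> 'a list \<Rightarrow> 'a list \<Rightarrow> bool"
  for R :: "('a list \<times> 'a list) set" and A :: "'a set" where
  refl: "set u \<subseteq> A \<Longrightarrow> pres_eq R A u u"
| sym: "pres_eq R A u w \<Longrightarrow> pres_eq R A w u"
| trans: "pres_eq R A u v \<Longrightarrow> pres_eq R A v w \<Longrightarrow> pres_eq R A u w"
| step: "(l, r) \<in> R \<Longrightarrow> set x \<subseteq> A \<Longrightarrow> set y \<subseteq> A \<Longrightarrow> pres_eq R A (x @ l @ y) (x @ r @ y)"

datatype kind = KSig | KV | KTau

datatype mgen = MG kind nat | MSigInv nat

text \<open>Letters of group words for VSG_n: (k, i, False) is the generator k_i,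
  (k, i, True) is its group inverse.\<close>
type_synonym gletter = "kind \<times> nat \<times> bool"

definition idx :: "nat \<Rightarrow> nat set" where
  "idx n = {1..n - 1}"

definition adj :: "nat \<Rightarrow> nat \<Rightarrow> bool" where
  "adj i j \<longleftrightarrow> i = j + 1 \<or> j = i + 1"

definition far :: "nat \<Rightarrow> nat \<Rightarrow> bool" where
  "far i j \<longleftrightarrow> i + 1 < j \<or> j + 1 < i"

definition basic_rels :: "nat \<Rightarrow> ((kind \<times> nat) list \<times> (kind \<times> nat) list) set" where
  "basic_rels n =
     {([(KV, i), (KV, i)], []) | i. i \<in> idx n}
   \<union> {([(KSig, i), (KTau, i)], [(KTau, i), (KSig, i)]) | i. i \<in> idx n}
   \<union> {([(KSig, i), (KSig, j), (KSig, i)], [(KSig, j), (KSig, i), (KSig, j)]) | i j. i \<in> idx n \<and> j \<in> idx n \<and> adj i j}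
   \<union> {([(KV, i), (KV, j), (KV, i)], [(KV, j), (KV, i), (KV, j)]) | i j. i \<in> idx n \<and> j \<in> idx n \<and> adj i j}
   \<union> {([(KV, i), (KSig, j), (KV, i)], [(KV, j), (KSig, i), (KV, j)]) | i j. i \<in> idx n \<and> j \<in> idx n \<and> adj i j}
   \<union> {([(KV, i), (KTau, j), (KV, i)], [(KV, j), (KTau, i), (KV, j)]) | i j. i \<in> idx n \<and> j \<in> idx n \<and> adj i j}
   \<union> {([(KSig, i), (KSig, j), (KTau, i)], [(KTau, j), (KSig, i), (KSig, j)]) | i j. i \<in> idx n \<and> j \<in> idx n \<and> adj i j}
   \<union> {([(g, i), (h, j)], [(h, j), (g, i)]) | g h i j. i \<in> idx n \<and> j \<in> idx n \<and> far i j}"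

definition vsb_alph :: "nat \<Rightarrow> mgen set" where
  "vsb_alph n = {MG k i | k i. i \<in> idx n} \<union> {MSigInv i | i. i \<in> idx n}"

definition vsb_rels :: "nat \<Rightarrow> (mgen list \<times> mgen list) set" where
  "vsb_rels n =
     {([MG KSig i, MSigInv i], []) | i. i \<in> idx n}
   \<union> {([MSigInv i, MG KSig i], []) | i. i \<in> idx n}
   \<union> {(map (\<lambda>(k, i). MG k i) l, map (\<lambda>(k, i). MG k i) r) | l r. (l, r) \<in> basic_rels n}"

definition vsb_eq :: "nat \<Rightarrow> mgen list \<Rightarrow> mgen list \<Rightarrow> bool" where
  "vsb_eq n = pres_eq (vsb_rels n) (vsb_alph n)"

definition vsg_alph :: "nat \<Rightarrow> gletter set" where
  "vsg_alph n = {(k, i, b) | k i b. i \<in> idx n}"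

definition vsg_rels :: "nat \<Rightarrow> (gletter list \<times> gletter list) set" where
  "vsg_rels n =
     {([(k, i, b), (k, i, \<not> b)], []) | k i b. i \<in> idx n}
   \<union> {(map (\<lambda>(k, i). (k, i, False)) l, map (\<lambda>(k, i). (k, i, False)) r) | l r. (l, r) \<in> basic_rels n}"

definition vsg_eq :: "nat \<Rightarrow> gletter list \<Rightarrow> gletter list \<Rightarrow> bool" where
  "vsg_eq n = pres_eq (vsg_rels n) (vsg_alph n)"

fun phi_letter :: "mgen \<Rightarrow> gletter list" where
  "phi_letter (MG k i) = [(k, i, False)]"
| "phi_letter (MSigInv i) = [(KSig, i, True)]"

definition phi :: "mgen list \<Rightarrow> gletter list" where
  "phi w = concat (map phi_letter w)"

end

theory Submission
  imports Defs
begin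

text \<open>Every word of \<open>VSB\<^sub>n\<close> equals a product \<open>t \<beta>\<close>, where \<open>\<beta>\<close> is a word in the invertible
  generators \<open>\<sigma>\<^sub>i\<^sup>\<plusminus>\<^sup>1, v\<^sub>i\<close> and \<open>t\<close> is a product of conjugates \<open>\<gamma> \<tau>\<^sub>i \<gamma>\<^sup>-\<^sup>1\<close> with \<open>\<gamma>\<close> invertible.
  Reading a word of \<open>VSG\<^sub>n\<close> letter by letter, one keeps track of \<open>\<beta>\<close> and, for every pair of classes
  of such conjugates that do not commute in \<open>VSB\<^sub>n\<close>, of the freely reduced image of \<open>t\<close> in the free
  group on that pair. These data are invariant under the relations of \<open>VSG\<^sub>n\<close>: the relations
  involving \<open>\<tau>\<close> only conjugate a factor of \<open>t\<close> or swap two commuting factors. For a word of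
  \<open>VSB\<^sub>n\<close> the factor \<open>t\<close> is positive, so the data are the projections of the sequence of its factors
  onto the non-commuting pairs, and as in the theory of trace monoids these projections determine
  the product up to the relations of \<open>VSB\<^sub>n\<close>.\<close>

lemma pres_eq_in_alphabet:
  assumes "pres_eq R A u w" and "\<And>l r. (l, r) \<in> R \<Longrightarrow> set l \<subseteq> A \<and> set r \<subseteq> A"
  shows "set u \<subseteq> A \<and> set w \<subseteq> A"
  using assms(1) by induction (use assms(2) in fastforce)+

lemma pres_eq_context:
  assumes "pres_eq R A u w" "set x \<subseteq> A" "set y \<subseteq> A"
  shows "pres_eq R A (x @ u @ y) (x @ w @ y)"
  using assms
proof (induction arbitrary: x y rule: pres_eq.induct)
  case (refl u)
  then show ?case by (intro pres_eq.refl) auto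
next
  case sym
  then show ?case by (blast intro: pres_eq.sym)
next
  case trans
  then show ?case by (blast intro: pres_eq.trans)
next
  case (step l r x' y')
  have "pres_eq R A ((x @ x') @ l @ (y' @ y)) ((x @ x') @ r @ (y' @ y))"
    by (rule pres_eq.step) (use step in auto)
  then show ?case by simp
qed

lemma pres_eq_append:
  assumes "pres_eq R A u u'" "pres_eq R A w w'"
    and "\<And>l r. (l, r) \<in> R \<Longrightarrow> set l \<subseteq> A \<and> set r \<subseteq> A"
  shows "pres_eq R A (u @ w) (u' @ w')"
proof -
  have "set u' \<subseteq> A" "set w \<subseteq> A"
    using pres_eq_in_alphabet[OF assms(1,3)] pres_eq_in_alphabet[OF assms(2,3)] by auto
  then have "pres_eq R A (u @ w) (u' @ w)" "pres_eq R A (u' @ w) (u' @ w')"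
    using pres_eq_context[OF assms(1), of "[]" w] pres_eq_context[OF assms(2), of u' "[]"] by auto
  then show ?thesis by (rule pres_eq.trans)
qed

lemma basic_rels_idx:
  "(l, r) \<in> basic_rels n \<Longrightarrow> (\<forall>(k, i) \<in> set l. i \<in> idx n) \<and> (\<forall>(k, i) \<in> set r. i \<in> idx n)"
  unfolding basic_rels_def by auto

lemma vsb_rels_in_alph: "(l, r) \<in> vsb_rels n \<Longrightarrow> set l \<subseteq> vsb_alph n \<and> set r \<subseteq> vsb_alph n"
  unfolding vsb_rels_def vsb_alph_def
  by (elim UnE; clarsimp) (drule basic_rels_idx, fastforce)

lemma vsb_eq_in_alph: "vsb_eq n u w \<Longrightarrow> set u \<subseteq> vsb_alph n \<and> set w \<subseteq> vsb_alph n"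
  unfolding vsb_eq_def using pres_eq_in_alphabet vsb_rels_in_alph by metis

lemma vsb_eq_refl: "set u \<subseteq> vsb_alph n \<Longrightarrow> vsb_eq n u u"
  unfolding vsb_eq_def by (rule pres_eq.refl)

lemma vsb_eq_sym: "vsb_eq n u w \<Longrightarrow> vsb_eq n w u"
  unfolding vsb_eq_def by (rule pres_eq.sym)

lemma vsb_eq_trans [trans]: "vsb_eq n u v \<Longrightarrow> vsb_eq n v w \<Longrightarrow> vsb_eq n u w"
  unfolding vsb_eq_def by (rule pres_eq.trans)

lemma vsb_eq_append: "vsb_eq n u u' \<Longrightarrow> vsb_eq n w w' \<Longrightarrow> vsb_eq n (u @ w) (u' @ w')"
  unfolding vsb_eq_def using pres_eq_append vsb_rels_in_alph by metis

lemma vsb_eq_context: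
  "vsb_eq n u w \<Longrightarrow> set x \<subseteq> vsb_alph n \<Longrightarrow> set y \<subseteq> vsb_alph n \<Longrightarrow> vsb_eq n (x @ u @ y) (x @ w @ y)"
  unfolding vsb_eq_def by (rule pres_eq_context)

lemma MG_in_vsb_alph: "i \<in> idx n \<Longrightarrow> MG k i \<in> vsb_alph n"
  unfolding vsb_alph_def by auto

lemma MSigInv_in_vsb_alph: "i \<in> idx n \<Longrightarrow> MSigInv i \<in> vsb_alph n"
  unfolding vsb_alph_def by auto

lemma vsb_eq_rel: "(l, r) \<in> vsb_rels n \<Longrightarrow> vsb_eq n l r"
  unfolding vsb_eq_def using pres_eq.step[of l r "vsb_rels n" "[]" "vsb_alph n" "[]"] by simp

lemma vsb_eq_basic:
  "(l, r) \<in> basic_rels n \<Longrightarrow> vsb_eq n (map (\<lambda>(k, i). MG k i) l) (map (\<lambda>(k, i). MG k i) r)"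
  by (rule vsb_eq_rel) (unfold vsb_rels_def, blast)

lemma vsb_eq_sigma_sigma_inv: "i \<in> idx n \<Longrightarrow> vsb_eq n [MG KSig i, MSigInv i] []"
  by (rule vsb_eq_rel) (unfold vsb_rels_def, blast)

lemma vsb_eq_sigma_inv_sigma: "i \<in> idx n \<Longrightarrow> vsb_eq n [MSigInv i, MG KSig i] []"
  by (rule vsb_eq_rel) (unfold vsb_rels_def, blast)

lemma vsb_eq_v_v: "i \<in> idx n \<Longrightarrow> vsb_eq n [MG KV i, MG KV i] []"
  using vsb_eq_basic[of "[(KV, i), (KV, i)]" "[]" n] by (simp add: basic_rels_def)

lemma vsb_eq_sigma_tau: "i \<in> idx n \<Longrightarrow> vsb_eq n [MG KSig i, MG KTau i] [MG KTau i, MG KSig i]"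
  using vsb_eq_basic[of "[(KSig, i), (KTau, i)]" "[(KTau, i), (KSig, i)]" n]
  by (simp add: basic_rels_def)

lemma vsb_eq_sigma_sigma_tau:
  "i \<in> idx n \<Longrightarrow> j \<in> idx n \<Longrightarrow> adj i j \<Longrightarrow>
    vsb_eq n [MG KSig i, MG KSig j, MG KTau i] [MG KTau j, MG KSig i, MG KSig j]"
  using vsb_eq_basic[of "[(KSig, i), (KSig, j), (KTau, i)]" "[(KTau, j), (KSig, i), (KSig, j)]" n]
  by (simp add: basic_rels_def)

lemma vsb_eq_v_tau_v:
  "i \<in> idx n \<Longrightarrow> j \<in> idx n \<Longrightarrow> adj i j \<Longrightarrow>
    vsb_eq n [MG KV i, MG KTau j, MG KV i] [MG KV j, MG KTau i, MG KV j]"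
  using vsb_eq_basic[of "[(KV, i), (KTau, j), (KV, i)]" "[(KV, j), (KTau, i), (KV, j)]" n]
  by (simp add: basic_rels_def)

lemma vsb_eq_far_commute:
  "i \<in> idx n \<Longrightarrow> j \<in> idx n \<Longrightarrow> far i j \<Longrightarrow> vsb_eq n [MG g i, MG h j] [MG h j, MG g i]"
  using vsb_eq_basic[of "[(g, i), (h, j)]" "[(h, j), (g, i)]" n] by (simp add: basic_rels_def)

section \<open>Invertible words and conjugates of \<open>\<tau>\<close>\<close>

definition unit_alph :: "nat \<Rightarrow> mgen set" where
  "unit_alph n = {MG KSig i | i. i \<in> idx n} \<union> {MSigInv i | i. i \<in> idx n} \<union> {MG KV i | i. i \<in> idx n}"

lemma unit_alph_subset: "unit_alph n \<subseteq> vsb_alph n"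
  unfolding unit_alph_def vsb_alph_def by auto

fun inv_letter :: "mgen \<Rightarrow> mgen" where
  "inv_letter (MG KSig i) = MSigInv i"
| "inv_letter (MSigInv i) = MG KSig i"
| "inv_letter (MG k i) = MG k i"

definition inv_word :: "mgen list \<Rightarrow> mgen list" where
  "inv_word w = rev (map inv_letter w)"

lemma inv_word_simps [simp]:
  "inv_word [] = []" "inv_word (c # w) = inv_word w @ [inv_letter c]"
  "inv_word (w @ w') = inv_word w' @ inv_word w"
  unfolding inv_word_def by auto

lemma inv_letter_in_unit_alph: "c \<in> unit_alph n \<Longrightarrow> inv_letter c \<in> unit_alph n"
  unfolding unit_alph_def by auto

lemma set_inv_word: "set w \<subseteq> unit_alph n \<Longrightarrow> set (inv_word w) \<subseteq> unit_alph n"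
  unfolding inv_word_def using inv_letter_in_unit_alph by auto

lemma unit_word_in_vsb_alph:
  "set w \<subseteq> unit_alph n \<Longrightarrow> set w \<subseteq> vsb_alph n \<and> set (inv_word w) \<subseteq> vsb_alph n"
  using set_inv_word unit_alph_subset by blast

lemma vsb_eq_letter_inv:
  "c \<in> unit_alph n \<Longrightarrow> vsb_eq n [c, inv_letter c] [] \<and> vsb_eq n [inv_letter c, c] []"
  unfolding unit_alph_def using vsb_eq_sigma_sigma_inv vsb_eq_sigma_inv_sigma vsb_eq_v_v by auto

lemma vsb_eq_inv_word:
  "set w \<subseteq> unit_alph n \<Longrightarrow> vsb_eq n (w @ inv_word w) [] \<and> vsb_eq n (inv_word w @ w) []"
proof (induction w)
  case Nil
  then show ?case by (simp add: vsb_eq_refl)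
next
  case (Cons c w)
  have c: "c \<in> unit_alph n" and w: "set w \<subseteq> unit_alph n"
    using Cons.prems by auto
  have alph: "set [c] \<subseteq> vsb_alph n" "set [inv_letter c] \<subseteq> vsb_alph n"
    "set w \<subseteq> vsb_alph n" "set (inv_word w) \<subseteq> vsb_alph n"
    using c w inv_letter_in_unit_alph[OF c] set_inv_word[OF w] unit_alph_subset by auto
  have "vsb_eq n ([c] @ (w @ inv_word w) @ [inv_letter c]) ([c] @ [] @ [inv_letter c])"
    using vsb_eq_context[OF conjunct1[OF Cons.IH[OF w]], of "[c]" "[inv_letter c]"] alph by simp
  also have "vsb_eq n ([c] @ [] @ [inv_letter c]) []"
    using vsb_eq_letter_inv[OF c] by simp
  finally have right: "vsb_eq n ((c # w) @ inv_word (c # w)) []"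
    by simp
  have "vsb_eq n (inv_word w @ [inv_letter c, c] @ w) (inv_word w @ [] @ w)"
    using vsb_eq_context[OF conjunct2[OF vsb_eq_letter_inv[OF c]], of "inv_word w" w] alph by simp
  also have "vsb_eq n (inv_word w @ [] @ w) []"
    using Cons.IH[OF w] by simp
  finally have left: "vsb_eq n (inv_word (c # w) @ (c # w)) []"
    by simp
  from right left show ?case ..
qed

lemma vsb_eq_inv_word_cong:
  assumes "set w \<subseteq> unit_alph n" "set w' \<subseteq> unit_alph n" "vsb_eq n w w'"
  shows "vsb_eq n (inv_word w) (inv_word w')"
proof -
  have alph: "set (inv_word w) \<subseteq> vsb_alph n" "set (inv_word w') \<subseteq> vsb_alph n"
    using set_inv_word assms unit_alph_subset by blast+
  have "vsb_eq n (inv_word w @ (w' @ inv_word w') @ []) (inv_word w @ [] @ [])"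
    using vsb_eq_context[OF conjunct1[OF vsb_eq_inv_word[OF assms(2)]], of "inv_word w" "[]"] alph
    by simp
  then have "vsb_eq n (inv_word w) (inv_word w @ w' @ inv_word w')"
    by (simp add: vsb_eq_sym)
  also have "vsb_eq n (inv_word w @ w' @ inv_word w') ([] @ (inv_word w @ w) @ inv_word w')"
    using vsb_eq_context[OF vsb_eq_sym[OF assms(3)]] alph by simp
  also have "vsb_eq n ([] @ (inv_word w @ w) @ inv_word w') ([] @ [] @ inv_word w')"
    using vsb_eq_context[OF conjunct2[OF vsb_eq_inv_word[OF assms(1)]], of "[]"] alph by simp
  finally show ?thesis by simp
qed

lemma vsb_eq_conj_if_commute:
  assumes "vsb_eq n (c # t) (t @ [c])" "c \<in> unit_alph n"
  shows "vsb_eq n (c # t @ [inv_letter c]) t"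
proof -
  have alph: "set t \<subseteq> vsb_alph n" "set [inv_letter c] \<subseteq> vsb_alph n"
    using vsb_eq_in_alph[OF assms(1)] assms(2) inv_letter_in_unit_alph unit_alph_subset by auto
  have "vsb_eq n ([] @ (c # t) @ [inv_letter c]) ([] @ (t @ [c]) @ [inv_letter c])"
    using vsb_eq_context[OF assms(1), of "[]" "[inv_letter c]"] alph by simp
  also have "vsb_eq n ([] @ (t @ [c]) @ [inv_letter c]) (t @ [] @ [])"
    using vsb_eq_context[OF conjunct1[OF vsb_eq_letter_inv[OF assms(2)]], of t "[]"] alph by simp
  finally show ?thesis by simp
qed

lemma vsb_eq_sigma_tau_conj: "i \<in> idx n \<Longrightarrow> vsb_eq n [MG KSig i, MG KTau i, MSigInv i] [MG KTau i]"
  using vsb_eq_conj_if_commute[of n "MG KSig i" "[MG KTau i]"] vsb_eq_sigma_tau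
  by (auto simp: unit_alph_def)

lemma vsb_eq_far_tau_conj:
  "i \<in> idx n \<Longrightarrow> j \<in> idx n \<Longrightarrow> far i j \<Longrightarrow> h \<in> {KSig, KV} \<Longrightarrow>
    vsb_eq n [MG h j, MG KTau i, inv_letter (MG h j)] [MG KTau i]"
  using vsb_eq_conj_if_commute[of n "MG h j" "[MG KTau i]"] vsb_eq_far_commute[of j n i h KTau]
  by (auto simp: unit_alph_def far_def)

lemma vsb_eq_sigma_sigma_tau_conj:
  assumes "i \<in> idx n" "j \<in> idx n" "adj i j"
  shows "vsb_eq n [MG KSig i, MG KSig j, MG KTau i, MSigInv j, MSigInv i] [MG KTau j]"
proof -
  have alph: "set [MSigInv j, MSigInv i] \<subseteq> vsb_alph n" "set [MG KTau j, MG KSig i] \<subseteq> vsb_alph n"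
    "set [MSigInv i] \<subseteq> vsb_alph n" "set [MG KTau j] \<subseteq> vsb_alph n"
    using assms MSigInv_in_vsb_alph MG_in_vsb_alph by auto
  have "vsb_eq n ([] @ [MG KSig i, MG KSig j, MG KTau i] @ [MSigInv j, MSigInv i])
                 ([] @ [MG KTau j, MG KSig i, MG KSig j] @ [MSigInv j, MSigInv i])"
    using vsb_eq_context[OF vsb_eq_sigma_sigma_tau[OF assms], of "[]"] alph by simp
  also have "vsb_eq n ([] @ [MG KTau j, MG KSig i, MG KSig j] @ [MSigInv j, MSigInv i])
                 ([MG KTau j, MG KSig i] @ [] @ [MSigInv i])"
    using vsb_eq_context[OF vsb_eq_sigma_sigma_inv[OF assms(2)], of "[MG KTau j, MG KSig i]"] alph
    by simp
  also have "vsb_eq n ([MG KTau j, MG KSig i] @ [] @ [MSigInv i]) ([MG KTau j] @ [] @ [])"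
    using vsb_eq_context[OF vsb_eq_sigma_sigma_inv[OF assms(1)], of "[MG KTau j]" "[]"] alph by simp
  finally show ?thesis by simp
qed

definition tau_conj :: "mgen list \<Rightarrow> nat \<Rightarrow> mgen list" where
  "tau_conj \<beta> i = \<beta> @ [MG KTau i] @ inv_word \<beta>"

lemma vsb_eq_conj:
  "set \<beta> \<subseteq> unit_alph n \<Longrightarrow> vsb_eq n a b \<Longrightarrow> vsb_eq n (\<beta> @ a @ inv_word \<beta>) (\<beta> @ b @ inv_word \<beta>)"
  using vsb_eq_context unit_word_in_vsb_alph by blast

lemma set_tau_conj: "set \<beta> \<subseteq> unit_alph n \<Longrightarrow> i \<in> idx n \<Longrightarrow> set (tau_conj \<beta> i) \<subseteq> vsb_alph n"
  unfolding tau_conj_def using unit_word_in_vsb_alph MG_in_vsb_alph by fastforce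

lemma vsb_eq_tau_conj_cong:
  assumes "set \<beta> \<subseteq> unit_alph n" "set \<beta>' \<subseteq> unit_alph n" "vsb_eq n \<beta> \<beta>'" "i \<in> idx n"
  shows "vsb_eq n (tau_conj \<beta> i) (tau_conj \<beta>' i)"
  unfolding tau_conj_def
  using unit_word_in_vsb_alph[OF assms(1)] MG_in_vsb_alph[OF assms(4)]
  by (intro vsb_eq_append[OF assms(3)] vsb_eq_append[OF vsb_eq_refl vsb_eq_inv_word_cong[OF assms(1-3)]])
    auto

lemma vsb_eq_tau_conj_append:
  assumes "set \<beta> \<subseteq> unit_alph n" "i \<in> idx n" "j \<in> idx n"
  shows "vsb_eq n (tau_conj \<beta> i @ tau_conj \<beta> j) (\<beta> @ [MG KTau i, MG KTau j] @ inv_word \<beta>)"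
proof -
  have "vsb_eq n ((\<beta> @ [MG KTau i]) @ (inv_word \<beta> @ \<beta>) @ ([MG KTau j] @ inv_word \<beta>))
                 ((\<beta> @ [MG KTau i]) @ [] @ ([MG KTau j] @ inv_word \<beta>))"
    using vsb_eq_context[OF conjunct2[OF vsb_eq_inv_word[OF assms(1)]],
        of "\<beta> @ [MG KTau i]" "[MG KTau j] @ inv_word \<beta>"] assms
      unit_word_in_vsb_alph[OF assms(1)] MG_in_vsb_alph by simp
  then show ?thesis unfolding tau_conj_def by simp
qed

definition vsb_class :: "nat \<Rightarrow> mgen list \<Rightarrow> mgen list set" where
  "vsb_class n w = {w'. vsb_eq n w w'}"

lemma vsb_class_eq: "vsb_eq n w w' \<Longrightarrow> vsb_class n w = vsb_class n w'"
  unfolding vsb_class_def using vsb_eq_sym vsb_eq_trans by blast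

lemma mem_vsb_class_self: "set w \<subseteq> vsb_alph n \<Longrightarrow> w \<in> vsb_class n w"
  unfolding vsb_class_def using vsb_eq_refl by blast

lemma vsb_eq_if_mem_vsb_class: "a \<in> vsb_class n w \<Longrightarrow> vsb_eq n w a"
  unfolding vsb_class_def by blast

lemma vsb_eq_if_vsb_class_eq: "vsb_class n w = vsb_class n w' \<Longrightarrow> set w \<subseteq> vsb_alph n \<Longrightarrow> vsb_eq n w w'"
  using mem_vsb_class_self vsb_eq_if_mem_vsb_class vsb_eq_sym by metis

definition independent :: "nat \<Rightarrow> mgen list set \<Rightarrow> mgen list set \<Rightarrow> bool" where
  "independent n x y \<longleftrightarrow> x \<noteq> y \<and> (\<forall>a \<in> x. \<forall>b \<in> y. vsb_eq n (a @ b) (b @ a))"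

definition dependent :: "nat \<Rightarrow> mgen list set \<Rightarrow> mgen list set \<Rightarrow> bool" where
  "dependent n x y \<longleftrightarrow> x = y \<or> \<not> independent n x y"

lemma independent_sym: "independent n x y \<Longrightarrow> independent n y x"
  unfolding independent_def using vsb_eq_sym by blast

lemma tau_conj_far_independent:
  assumes "set \<beta> \<subseteq> unit_alph n" "i \<in> idx n" "j \<in> idx n" "far i j"
    and "vsb_class n (tau_conj \<beta> i) \<noteq> vsb_class n (tau_conj \<beta> j)"
  shows "independent n (vsb_class n (tau_conj \<beta> i)) (vsb_class n (tau_conj \<beta> j))"
proof -
  have "vsb_eq n (tau_conj \<beta> i @ tau_conj \<beta> j) (\<beta> @ [MG KTau i, MG KTau j] @ inv_word \<beta>)"
    by (rule vsb_eq_tau_conj_append[OF assms(1-3)])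
  also have "vsb_eq n \<dots> (\<beta> @ [MG KTau j, MG KTau i] @ inv_word \<beta>)"
    by (rule vsb_eq_conj[OF assms(1) vsb_eq_far_commute[OF assms(2-4)]])
  also have "vsb_eq n \<dots> (tau_conj \<beta> j @ tau_conj \<beta> i)"
    by (rule vsb_eq_sym[OF vsb_eq_tau_conj_append[OF assms(1,3,2)]])
  finally have comm: "vsb_eq n (tau_conj \<beta> i @ tau_conj \<beta> j) (tau_conj \<beta> j @ tau_conj \<beta> i)" .
  have "vsb_eq n (x @ y) (y @ x)"
    if "vsb_eq n (tau_conj \<beta> i) x" "vsb_eq n (tau_conj \<beta> j) y" for x y
  proof -
    have "vsb_eq n (x @ y) (tau_conj \<beta> i @ tau_conj \<beta> j)"
      using vsb_eq_sym[OF vsb_eq_append[OF that]] .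
    also note comm
    also have "vsb_eq n (tau_conj \<beta> j @ tau_conj \<beta> i) (y @ x)"
      using vsb_eq_append[OF that(2,1)] .
    finally show ?thesis .
  qed
  then show ?thesis
    using assms(5) unfolding independent_def vsb_class_def by blast
qed

section \<open>Freely reduced words\<close>

text \<open>A letter \<open>(x, c)\<close> of a free group word stands for \<open>x\<close> if \<open>c\<close> is false and for \<open>x\<^sup>-\<^sup>1\<close> otherwise.\<close>

definition freely_reduced :: "('a \<times> bool) list \<Rightarrow> bool" where
  "freely_reduced = successively (\<lambda>(x, c) (y, d). x = y \<longrightarrow> c = d)"

definition append_reduced :: "'a \<times> bool \<Rightarrow> ('a \<times> bool) list \<Rightarrow> ('a \<times> bool) list" where
  "append_reduced z r = (if r \<noteq> [] \<and> last r = (fst z, \<not> snd z) then butlast r else r @ [z])"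

lemma freely_reduced_snoc_iff:
  "freely_reduced (r @ [(x, c)]) \<longleftrightarrow> freely_reduced r \<and> (r \<noteq> [] \<longrightarrow> last r \<noteq> (x, \<not> c))"
  unfolding freely_reduced_def successively_append_iff by (cases "last r") auto

lemma freely_reduced_append_reduced: "freely_reduced r \<Longrightarrow> freely_reduced (append_reduced z r)"
proof (cases z)
  case (Pair x c)
  assume red: "freely_reduced r"
  show ?thesis
  proof (cases "r \<noteq> [] \<and> last r = (x, \<not> c)")
    case True
    then have "freely_reduced (butlast r @ [(x, \<not> c)])"
      using red by (metis append_butlast_last_id)
    then show ?thesis
      using True Pair freely_reduced_snoc_iff[of "butlast r" x "\<not> c"] by (simp add: append_reduced_def)
  next
    case False
    then have "freely_reduced (r @ [(x, c)])"
      using red freely_reduced_snoc_iff[of r x c] by auto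
    then show ?thesis
      using False Pair by (auto simp: append_reduced_def)
  qed
qed

lemma append_reduced_cancel:
  assumes "freely_reduced r"
  shows "append_reduced (x, c) (append_reduced (x, \<not> c) r) = r"
proof (cases "r \<noteq> [] \<and> last r = (x, c)")
  case True
  then have r: "r = butlast r @ [(x, c)]"
    by (metis append_butlast_last_id)
  have "freely_reduced (butlast r @ [(x, c)])"
    using assms by (subst (asm) r)
  then have "\<not> (butlast r \<noteq> [] \<and> last (butlast r) = (x, \<not> c))"
    by (auto simp: freely_reduced_snoc_iff)
  then have "append_reduced (x, c) (butlast r) = r"
    using r[symmetric] by (auto simp: append_reduced_def)
  moreover have "append_reduced (x, \<not> c) r = butlast r"
    using True by (simp add: append_reduced_def)
  ultimately show ?thesis
    by simp
next
  case False
  then show ?thesis by (auto simp: append_reduced_def)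
qed

section \<open>Reading words of the group\<close>

text \<open>A projection table assigns to every pair \<open>(a, b)\<close> of classes the freely reduced image of a
  sequence of classes in the free group on \<open>{a, b}\<close>; only dependent pairs are ever written.\<close>

type_synonym proj_table = "mgen list set \<Rightarrow> mgen list set \<Rightarrow> (mgen list set \<times> bool) list"

definition record_letter :: "nat \<Rightarrow> mgen list set \<Rightarrow> bool \<Rightarrow> proj_table \<Rightarrow> proj_table" where
  "record_letter n x c p =
     (\<lambda>a b. if (x = a \<or> x = b) \<and> dependent n a b then append_reduced (x, c) (p a b) else p a b)"

lemma record_letter_reduced:
  "\<forall>a b. freely_reduced (p a b) \<Longrightarrow> \<forall>a b. freely_reduced (record_letter n x c p a b)"
  unfolding record_letter_def
  by (auto simp: freely_reduced_append_reduced)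

lemma record_letter_cancel:
  "\<forall>a b. freely_reduced (p a b) \<Longrightarrow> record_letter n x c (record_letter n x (\<not> c) p) = p"
  unfolding record_letter_def by (intro ext) (auto simp: append_reduced_cancel)

lemma record_letter_commute:
  assumes "x = y \<or> independent n x y"
  shows "record_letter n y c (record_letter n x c p) = record_letter n x c (record_letter n y c p)"
proof (cases "x = y")
  case False
  then have "independent n x y" "independent n y x"
    using assms independent_sym by auto
  then have "\<not> ((x = a \<or> x = b) \<and> (y = a \<or> y = b) \<and> dependent n a b)" for a b
    using False unfolding dependent_def by auto
  then show ?thesis
    unfolding record_letter_def by (intro ext) auto
qed simp

text \<open>A state \<open>(\<beta>, p)\<close> stands for \<open>t \<beta>\<close>, where \<open>\<beta>\<close> is a word in the invertible generators and
  \<open>t\<close> a product of conjugates \<open>\<gamma> \<tau>\<^sub>i \<gamma>\<^sup>-\<^sup>1\<close> whose projections are recorded in \<open>p\<close>.\<close>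

type_synonym state = "mgen list \<times> proj_table"

fun read_letter :: "nat \<Rightarrow> gletter \<Rightarrow> state \<Rightarrow> state" where
  "read_letter n (KTau, i, c) (\<beta>, p) = (\<beta>, record_letter n (vsb_class n (tau_conj \<beta> i)) c p)"
| "read_letter n (KSig, i, c) (\<beta>, p) = (\<beta> @ [if c then MSigInv i else MG KSig i], p)"
| "read_letter n (KV, i, c) (\<beta>, p) = (\<beta> @ [MG KV i], p)"

definition run :: "nat \<Rightarrow> gletter list \<Rightarrow> state \<Rightarrow> state" where
  "run n g s = fold (read_letter n) g s"

lemma run_simps [simp]:
  "run n [] s = s" "run n (a # g) s = run n g (read_letter n a s)"
  "run n (g @ h) s = run n h (run n g s)"
  unfolding run_def by auto

definition admissible :: "nat \<Rightarrow> state \<Rightarrow> bool" where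
  "admissible n s \<longleftrightarrow> set (fst s) \<subseteq> unit_alph n \<and> (\<forall>a b. freely_reduced (snd s a b))"

definition state_eq :: "nat \<Rightarrow> state \<Rightarrow> state \<Rightarrow> bool" where
  "state_eq n s s' \<longleftrightarrow> vsb_eq n (fst s) (fst s') \<and> snd s = snd s'"

lemma state_eq_refl: "admissible n s \<Longrightarrow> state_eq n s s"
  unfolding admissible_def state_eq_def using unit_alph_subset vsb_eq_refl by blast

lemma state_eq_sym: "state_eq n s s' \<Longrightarrow> state_eq n s' s"
  unfolding state_eq_def using vsb_eq_sym by auto

lemma state_eq_trans: "state_eq n s s' \<Longrightarrow> state_eq n s' s'' \<Longrightarrow> state_eq n s s''"
  unfolding state_eq_def using vsb_eq_trans by auto

lemma idx_if_in_vsg_alph: "(k, i, c) \<in> vsg_alph n \<Longrightarrow> i \<in> idx n"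
  unfolding vsg_alph_def by auto

lemma admissible_read_letter:
  assumes "admissible n s" "g \<in> vsg_alph n"
  shows "admissible n (read_letter n g s)"
proof -
  obtain k i c \<beta> p where g: "g = (k, i, c)" and s: "s = (\<beta>, p)"
    by (metis prod.exhaust)
  have "i \<in> idx n"
    using assms(2) g idx_if_in_vsg_alph by blast
  then show ?thesis
    using assms(1) record_letter_reduced unfolding g s admissible_def
    by (cases k) (auto simp: unit_alph_def)
qed

lemma admissible_run: "set g \<subseteq> vsg_alph n \<Longrightarrow> admissible n s \<Longrightarrow> admissible n (run n g s)"
  by (induction g arbitrary: s) (auto simp: admissible_read_letter)

lemma state_eq_read_letter:
  assumes "admissible n s" "admissible n s'" "state_eq n s s'" "g \<in> vsg_alph n"
  shows "state_eq n (read_letter n g s) (read_letter n g s')"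
proof -
  obtain k i c \<beta> p \<beta>' p' where g: "g = (k, i, c)" and s: "s = (\<beta>, p)" and s': "s' = (\<beta>', p')"
    by (metis prod.exhaust)
  have i: "i \<in> idx n"
    using assms(4) g idx_if_in_vsg_alph by blast
  have \<beta>: "vsb_eq n \<beta> \<beta>'" "p = p'" "set \<beta> \<subseteq> unit_alph n" "set \<beta>' \<subseteq> unit_alph n"
    using assms(1-3) unfolding s s' state_eq_def admissible_def by auto
  have "vsb_eq n (\<beta> @ [a]) (\<beta>' @ [a])" if "a \<in> vsb_alph n" for a
    using vsb_eq_append[OF \<beta>(1) vsb_eq_refl[of "[a]"]] that by simp
  moreover have "vsb_class n (tau_conj \<beta> i) = vsb_class n (tau_conj \<beta>' i)"
    by (rule vsb_class_eq[OF vsb_eq_tau_conj_cong[OF \<beta>(3,4,1) i]])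
  ultimately show ?thesis
    using \<beta>(1,2) i MG_in_vsb_alph MSigInv_in_vsb_alph unfolding g s s' state_eq_def
    by (cases k) auto
qed

lemma state_eq_run:
  "set g \<subseteq> vsg_alph n \<Longrightarrow> admissible n s \<Longrightarrow> admissible n s' \<Longrightarrow> state_eq n s s' \<Longrightarrow>
    state_eq n (run n g s) (run n g s')"
  by (induction g arbitrary: s s') (auto simp: state_eq_read_letter admissible_read_letter)

section \<open>Invariance under the relations of the group\<close>

lemma run_tau_free:
  "\<forall>(k, i) \<in> set l. k \<noteq> KTau \<Longrightarrow>
    run n (map (\<lambda>(k, i). (k, i, False)) l) (\<beta>, p) = (\<beta> @ map (\<lambda>(k, i). MG k i) l, p)"
proof (induction l arbitrary: \<beta>)
  case (Cons a l)
  then show ?case by (cases a; cases "fst a") auto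
qed simp

lemma basic_rels_cases:
  assumes "(l, r) \<in> basic_rels n"
  obtains (tau_free) "\<forall>(k, i) \<in> set l \<union> set r. k \<noteq> KTau"
  | (sigma_tau) i where "l = [(KSig, i), (KTau, i)]" "r = [(KTau, i), (KSig, i)]" "i \<in> idx n"
  | (v_tau_v) i j where "l = [(KV, i), (KTau, j), (KV, i)]" "r = [(KV, j), (KTau, i), (KV, j)]"
      "i \<in> idx n" "j \<in> idx n" "adj i j"
  | (sigma_sigma_tau) i j where "l = [(KSig, i), (KSig, j), (KTau, i)]"
      "r = [(KTau, j), (KSig, i), (KSig, j)]" "i \<in> idx n" "j \<in> idx n" "adj i j"
  | (far_tau_tau) i j where "l = [(KTau, i), (KTau, j)]" "r = [(KTau, j), (KTau, i)]"
      "i \<in> idx n" "j \<in> idx n" "far i j"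
  | (far_tau) g i j where "g \<noteq> KTau" "i \<in> idx n" "j \<in> idx n" "far i j"
      "(l, r) = ([(KTau, i), (g, j)], [(g, j), (KTau, i)]) \<or>
       (r, l) = ([(KTau, i), (g, j)], [(g, j), (KTau, i)])"
  using assms unfolding basic_rels_def
  by (elim UnE CollectE exE conjE) (fastforce intro: that simp: far_def)+

lemma vsb_class_tau_conj_snoc:
  "vsb_class n (tau_conj (\<beta> @ [c]) i) = vsb_class n (\<beta> @ [c, MG KTau i, inv_letter c] @ inv_word \<beta>)"
  by (simp add: tau_conj_def)

lemma state_eq_run_far_tau:
  assumes "admissible n (\<beta>, p)" "i \<in> idx n" "j \<in> idx n" "far i j" "g \<noteq> KTau"
  shows "state_eq n (run n [(g, j, False), (KTau, i, False)] (\<beta>, p))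
                    (run n [(KTau, i, False), (g, j, False)] (\<beta>, p))"
proof -
  have \<beta>: "set \<beta> \<subseteq> unit_alph n"
    using assms(1) unfolding admissible_def by simp
  have g: "g \<in> {KSig, KV}"
    using assms(5) by (cases g) auto
  have "vsb_class n (\<beta> @ [MG g j, MG KTau i, inv_letter (MG g j)] @ inv_word \<beta>) =
        vsb_class n (tau_conj \<beta> i)"
    unfolding tau_conj_def by (rule vsb_class_eq[OF vsb_eq_conj[OF \<beta> vsb_eq_far_tau_conj[OF assms(2-4) g]]])
  moreover have "vsb_eq n (\<beta> @ [MG g j]) (\<beta> @ [MG g j])"
    using \<beta> unit_alph_subset MG_in_vsb_alph[OF assms(3)] by (intro vsb_eq_refl) auto
  ultimately show ?thesis
    using g by (auto simp: state_eq_def vsb_class_tau_conj_snoc)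
qed

lemma state_eq_run_basic_rel:
  assumes "(l, r) \<in> basic_rels n" "admissible n (\<beta>, p)"
  shows "state_eq n (run n (map (\<lambda>(k, i). (k, i, False)) l) (\<beta>, p))
                    (run n (map (\<lambda>(k, i). (k, i, False)) r) (\<beta>, p))"
proof -
  have \<beta>: "set \<beta> \<subseteq> unit_alph n" "set \<beta> \<subseteq> vsb_alph n"
    using assms(2) unit_alph_subset unfolding admissible_def by auto
  have conj_eq: "vsb_class n (\<beta> @ a @ inv_word \<beta>) = vsb_class n (\<beta> @ b @ inv_word \<beta>)"
    if "vsb_eq n a b" for a b
    using vsb_class_eq[OF vsb_eq_conj[OF \<beta>(1) that]] .
  have \<beta>_append: "vsb_eq n (\<beta> @ a) (\<beta> @ a)" if "set a \<subseteq> vsb_alph n" for a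
    using \<beta>(2) that by (intro vsb_eq_refl) auto
  from assms(1) show ?thesis
  proof (cases rule: basic_rels_cases)
    case tau_free
    then have "run n (map (\<lambda>(k, i). (k, i, False)) l) (\<beta>, p) = (\<beta> @ map (\<lambda>(k, i). MG k i) l, p)"
      "run n (map (\<lambda>(k, i). (k, i, False)) r) (\<beta>, p) = (\<beta> @ map (\<lambda>(k, i). MG k i) r, p)"
      by (auto intro: run_tau_free)
    then show ?thesis
      using vsb_eq_context[OF vsb_eq_basic[OF assms(1)], of \<beta> "[]"] \<beta>(2)
      by (simp add: state_eq_def)
  next
    case (sigma_tau i)
    then show ?thesis
      using conj_eq[OF vsb_eq_sigma_tau_conj] \<beta>_append[of "[MG KSig i]"] MG_in_vsb_alph
      by (simp add: state_eq_def tau_conj_def)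
  next
    case (v_tau_v i j)
    have "vsb_eq n (\<beta> @ [MG KV k, MG KV k] @ []) (\<beta> @ [] @ [])" if "k \<in> idx n" for k
      using vsb_eq_context[OF vsb_eq_v_v[OF that], of \<beta> "[]"] \<beta>(2) by simp
    then have "vsb_eq n (\<beta> @ [MG KV i, MG KV i]) (\<beta> @ [MG KV j, MG KV j])"
      using v_tau_v(3,4) vsb_eq_sym vsb_eq_trans by (metis append_Nil append_Nil2)
    then show ?thesis
      using v_tau_v conj_eq[OF vsb_eq_v_tau_v[OF v_tau_v(3-5)]] by (simp add: state_eq_def tau_conj_def)
  next
    case (sigma_sigma_tau i j)
    then show ?thesis
      using conj_eq[OF vsb_eq_sigma_sigma_tau_conj] \<beta>_append[of "[MG KSig i, MG KSig j]"] MG_in_vsb_alph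
      by (simp add: state_eq_def tau_conj_def)
  next
    case (far_tau_tau i j)
    have "record_letter n (vsb_class n (tau_conj \<beta> j)) False (record_letter n (vsb_class n (tau_conj \<beta> i)) False p) =
          record_letter n (vsb_class n (tau_conj \<beta> i)) False (record_letter n (vsb_class n (tau_conj \<beta> j)) False p)"
      using record_letter_commute tau_conj_far_independent[OF \<beta>(1) far_tau_tau(3-5)] by blast
    then show ?thesis
      using far_tau_tau \<beta>_append[of "[]"] by (simp add: state_eq_def)
  next
    case (far_tau g i j)
    note far = state_eq_run_far_tau[OF assms(2) far_tau(2-4,1)]
    from far_tau(5) show ?thesis
    proof
      assume "(l, r) = ([(KTau, i), (g, j)], [(g, j), (KTau, i)])"
      then show ?thesis
        using state_eq_sym[OF far] by simp
    next
      assume "(r, l) = ([(KTau, i), (g, j)], [(g, j), (KTau, i)])"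
      then show ?thesis
        using far by simp
    qed
  qed
qed

lemma vsg_rels_in_alph: "(l, r) \<in> vsg_rels n \<Longrightarrow> set l \<subseteq> vsg_alph n \<and> set r \<subseteq> vsg_alph n"
  unfolding vsg_rels_def
  by (elim UnE CollectE exE conjE) (auto simp: vsg_alph_def dest!: basic_rels_idx)

lemma state_eq_run_vsg_rel:
  assumes "(l, r) \<in> vsg_rels n" "admissible n s"
  shows "state_eq n (run n l s) (run n r s)"
proof -
  obtain \<beta> p where s: "s = (\<beta>, p)"
    by (cases s)
  have \<beta>: "set \<beta> \<subseteq> vsb_alph n" and red: "\<forall>a b. freely_reduced (p a b)"
    using assms(2) unit_alph_subset unfolding s admissible_def by auto
  from assms(1) consider
      (cancel) k i c where "l = [(k, i, c), (k, i, \<not> c)]" "r = []" "i \<in> idx n"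
    | (basic) l0 r0 where "l = map (\<lambda>(k, i). (k, i, False)) l0" "r = map (\<lambda>(k, i). (k, i, False)) r0"
        "(l0, r0) \<in> basic_rels n"
    unfolding vsg_rels_def by blast
  then show ?thesis
  proof cases
    case basic
    then show ?thesis
      using state_eq_run_basic_rel assms(2) s by simp
  next
    case (cancel k i c)
    have unit_cancel: "vsb_eq n (\<beta> @ [a, b] @ []) (\<beta> @ [] @ [])" if "vsb_eq n [a, b] []" for a b
      using vsb_eq_context[OF that, of \<beta> "[]"] \<beta> by simp
    show ?thesis
    proof (cases k)
      case KTau
      have "record_letter n x (\<not> c) (record_letter n x c p) = p" for x
        using record_letter_cancel[OF red, of n x "\<not> c"] by simp
      then show ?thesis
        using cancel KTau s \<beta> vsb_eq_refl by (simp add: state_eq_def)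
    next
      case KV
      then show ?thesis
        using cancel s unit_cancel[OF vsb_eq_v_v[OF cancel(3)]] by (simp add: state_eq_def)
    next
      case KSig
      then show ?thesis
        using cancel s unit_cancel[OF vsb_eq_sigma_sigma_inv[OF cancel(3)]]
          unit_cancel[OF vsb_eq_sigma_inv_sigma[OF cancel(3)]]
        by (cases c) (simp_all add: state_eq_def)
    qed
  qed
qed

lemma state_eq_run_if_vsg_eq:
  "vsg_eq n g g' \<Longrightarrow> admissible n s \<Longrightarrow> state_eq n (run n g s) (run n g' s)"
  unfolding vsg_eq_def
proof (induction arbitrary: s rule: pres_eq.induct)
  case (refl u)
  then show ?case using state_eq_refl admissible_run by blast
next
  case (sym u w)
  then show ?case using state_eq_sym by blast
next
  case (trans u v w)
  then show ?case using state_eq_trans by blast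
next
  case (step l r x y)
  have x: "admissible n (run n x s)"
    using admissible_run step by blast
  have lr: "set l \<subseteq> vsg_alph n" "set r \<subseteq> vsg_alph n"
    using vsg_rels_in_alph[OF step(1)] by auto
  have "state_eq n (run n l (run n x s)) (run n r (run n x s))"
    by (rule state_eq_run_vsg_rel[OF step(1) x])
  then have "state_eq n (run n y (run n l (run n x s))) (run n y (run n r (run n x s)))"
    using state_eq_run step(3) admissible_run[OF lr(1) x] admissible_run[OF lr(2) x] by blast
  then show ?case by simp
qed

fun split_letter :: "mgen \<Rightarrow> mgen list \<times> mgen list list \<Rightarrow> mgen list \<times> mgen list list" where
  "split_letter (MG KTau i) (\<beta>, ts) = (\<beta>, ts @ [tau_conj \<beta> i])"
| "split_letter c (\<beta>, ts) = (\<beta> @ [c], ts)"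

definition split_word :: "mgen list \<Rightarrow> mgen list \<times> mgen list list" where
  "split_word m = fold split_letter m ([], [])"

lemma split_word_Nil: "split_word [] = ([], [])"
  unfolding split_word_def by simp

lemma split_word_snoc: "split_word (m @ [c]) = split_letter c (split_word m)"
  unfolding split_word_def by simp

lemma split_letter_unit: "\<forall>i. c \<noteq> MG KTau i \<Longrightarrow> split_letter c (\<beta>, ts) = (\<beta> @ [c], ts)"
  by (cases "(c, \<beta>, ts)" rule: split_letter.cases) auto

lemma in_unit_alph_if_not_tau: "c \<in> vsb_alph n \<Longrightarrow> \<forall>i. c \<noteq> MG KTau i \<Longrightarrow> c \<in> unit_alph n"
  unfolding vsb_alph_def unit_alph_def by (auto intro: kind.exhaust)

lemma split_letter_correct:
  assumes "set \<beta> \<subseteq> unit_alph n" "\<forall>t \<in> set ts. set t \<subseteq> vsb_alph n" "c \<in> vsb_alph n"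
    and "split_letter c (\<beta>, ts) = (\<beta>', ts')"
  shows "set \<beta>' \<subseteq> unit_alph n \<and> (\<forall>t \<in> set ts'. set t \<subseteq> vsb_alph n) \<and>
    vsb_eq n (concat ts @ \<beta> @ [c]) (concat ts' @ \<beta>')"
proof -
  have ts: "set (concat ts) \<subseteq> vsb_alph n"
    using assms(2) by auto
  have \<beta>: "set \<beta> \<subseteq> vsb_alph n" "set (inv_word \<beta>) \<subseteq> vsb_alph n"
    using unit_word_in_vsb_alph[OF assms(1)] by auto
  show ?thesis
  proof (cases "\<exists>i. c = MG KTau i")
    case True
    then obtain i where c: "c = MG KTau i" and i: "i \<in> idx n"
      using assms(3) unfolding vsb_alph_def by auto
    have "vsb_eq n ((concat ts @ \<beta> @ [c]) @ [] @ []) ((concat ts @ \<beta> @ [c]) @ (inv_word \<beta> @ \<beta>) @ [])"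
      using vsb_eq_context[OF vsb_eq_sym[OF conjunct2[OF vsb_eq_inv_word[OF assms(1)]]],
          of "concat ts @ \<beta> @ [c]" "[]"] ts \<beta> assms(3) by simp
    then have "vsb_eq n (concat ts @ \<beta> @ [c]) (concat (ts @ [tau_conj \<beta> i]) @ \<beta>)"
      using c by (simp add: tau_conj_def)
    moreover have "\<beta>' = \<beta>" "ts' = ts @ [tau_conj \<beta> i]"
      using assms(4) c by auto
    ultimately show ?thesis
      using assms(1,2) set_tau_conj[OF assms(1) i] by auto
  next
    case False
    then have "\<beta>' = \<beta> @ [c]" "ts' = ts" "c \<in> unit_alph n"
      using assms(3,4) split_letter_unit in_unit_alph_if_not_tau by auto
    then show ?thesis
      using assms(1,2,3) ts \<beta> vsb_eq_refl[of "concat ts @ \<beta> @ [c]"] by auto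
  qed
qed

lemma split_word_correct:
  "set m \<subseteq> vsb_alph n \<Longrightarrow>
    set (fst (split_word m)) \<subseteq> unit_alph n \<and> (\<forall>t \<in> set (snd (split_word m)). set t \<subseteq> vsb_alph n) \<and>
    vsb_eq n m (concat (snd (split_word m)) @ fst (split_word m))"
proof (induction m rule: rev_induct)
  case Nil
  then show ?case by (simp add: split_word_Nil vsb_eq_refl)
next
  case (snoc c m)
  obtain \<beta> ts where m: "split_word m = (\<beta>, ts)"
    by fastforce
  obtain \<beta>' ts' where c: "split_letter c (\<beta>, ts) = (\<beta>', ts')"
    by fastforce
  have IH: "set \<beta> \<subseteq> unit_alph n" "\<forall>t \<in> set ts. set t \<subseteq> vsb_alph n" "vsb_eq n m (concat ts @ \<beta>)"
    using snoc m by auto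
  have "vsb_eq n (m @ [c]) ((concat ts @ \<beta>) @ [c])"
    using vsb_eq_append[OF IH(3) vsb_eq_refl[of "[c]"]] snoc.prems by simp
  then show ?case
    using split_letter_correct[OF IH(1,2) _ c] snoc.prems vsb_eq_trans
    by (auto simp: split_word_snoc m c)
qed

section \<open>Projections onto pairs of classes\<close>

definition pair_projection :: "nat \<Rightarrow> mgen list set \<Rightarrow> mgen list set \<Rightarrow> mgen list list \<Rightarrow> mgen list set list" where
  "pair_projection n a b ts = filter (\<lambda>x. x = a \<or> x = b) (map (vsb_class n) ts)"

definition same_projections :: "nat \<Rightarrow> mgen list list \<Rightarrow> mgen list list \<Rightarrow> bool" where
  "same_projections n ts ts' \<longleftrightarrow>
     (\<forall>a b. dependent n a b \<longrightarrow> pair_projection n a b ts = pair_projection n a b ts')"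

definition positive_table :: "nat \<Rightarrow> mgen list list \<Rightarrow> proj_table" where
  "positive_table n ts =
     (\<lambda>a b. if dependent n a b then map (\<lambda>x. (x, False)) (pair_projection n a b ts) else [])"

lemma record_letter_positive_table:
  "record_letter n (vsb_class n t) False (positive_table n ts) = positive_table n (ts @ [t])"
  unfolding record_letter_def positive_table_def pair_projection_def
  by (intro ext) (auto simp: append_reduced_def last_map)

lemma same_projections_if_positive_table_eq:
  assumes "positive_table n ts = positive_table n ts'"
  shows "same_projections n ts ts'"
  unfolding same_projections_def
proof (intro allI impI)
  fix a b
  assume "dependent n a b"
  then have "map (\<lambda>x. (x, False)) (pair_projection n a b ts) = map (\<lambda>x. (x, False)) (pair_projection n a b ts')"
    using fun_cong[OF fun_cong[OF assms, of a], of b] unfolding positive_table_def by simp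
  then show "pair_projection n a b ts = pair_projection n a b ts'"
    by (simp add: inj_map_eq_map inj_on_def)
qed

lemma run_phi:
  "run n (phi m) ([], \<lambda>a b. []) = (fst (split_word m), positive_table n (snd (split_word m)))"
proof (induction m rule: rev_induct)
  case Nil
  have "positive_table n [] = (\<lambda>a b. [])"
    unfolding positive_table_def pair_projection_def by (intro ext) simp
  then show ?case by (simp add: phi_def split_word_Nil)
next
  case (snoc c m)
  obtain \<beta> ts where m: "split_word m = (\<beta>, ts)"
    by fastforce
  have "phi (m @ [c]) = phi m @ phi_letter c"
    by (simp add: phi_def)
  then show ?case
    using snoc m record_letter_positive_table
    by (cases "(c, \<beta>, ts)" rule: split_letter.cases) (auto simp: split_word_snoc)
qed

lemma vsb_eq_commute_concat:
  assumes "set z \<subseteq> vsb_alph n"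
    and "\<forall>d \<in> set ts. set d \<subseteq> vsb_alph n \<and> independent n (vsb_class n z) (vsb_class n d)"
  shows "vsb_eq n (concat ts @ z) (z @ concat ts)"
  using assms(2)
proof (induction ts)
  case Nil
  then show ?case using vsb_eq_refl[OF assms(1)] by simp
next
  case (Cons d ts)
  have d: "set d \<subseteq> vsb_alph n" "set (concat ts) \<subseteq> vsb_alph n"
    using Cons.prems by auto
  have "vsb_eq n (z @ d) (d @ z)"
    using Cons.prems mem_vsb_class_self[OF assms(1)] mem_vsb_class_self[OF d(1)]
    unfolding independent_def by auto
  then have "vsb_eq n ([] @ (d @ z) @ concat ts) ([] @ (z @ d) @ concat ts)"
    using vsb_eq_context[OF vsb_eq_sym, of n "z @ d" "d @ z" "[]" "concat ts"] d by simp
  moreover have "vsb_eq n (d @ (concat ts @ z) @ []) (d @ (z @ concat ts) @ [])"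
    using vsb_eq_context[OF Cons.IH, of d "[]"] Cons.prems d by simp
  ultimately show ?case
    using vsb_eq_trans[of n "concat (d # ts) @ z" "d @ z @ concat ts" "z @ concat (d # ts)"] by simp
qed

lemma same_projections_Nil: "same_projections n [] ts \<Longrightarrow> ts = []"
proof (rule ccontr)
  assume same: "same_projections n [] ts" and "ts \<noteq> []"
  then obtain t where "t \<in> set ts"
    by (cases ts) auto
  moreover have "pair_projection n (vsb_class n t) (vsb_class n t) ts = []"
    using same unfolding same_projections_def dependent_def pair_projection_def by auto
  ultimately show False
    unfolding pair_projection_def by (auto simp: filter_empty_conv)
qed

lemma independent_if_before_first:
  assumes same: "same_projections n (y # ys) (t1 @ z # t2)"
    and first: "vsb_class n z = vsb_class n y" "\<forall>d \<in> set t1. vsb_class n d \<noteq> vsb_class n y"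
    and d: "d \<in> set t1"
  shows "independent n (vsb_class n y) (vsb_class n d)"
proof (rule ccontr)
  let ?c = "vsb_class n y" and ?e = "vsb_class n d"
  assume "\<not> independent n ?c ?e"
  then have "pair_projection n ?c ?e (y # ys) = pair_projection n ?c ?e (t1 @ z # t2)"
    using same unfolding same_projections_def dependent_def by blast
  moreover obtain f fs where f: "pair_projection n ?c ?e t1 = f # fs"
    using d unfolding pair_projection_def
    by (cases "filter (\<lambda>x. x = ?c \<or> x = ?e) (map (vsb_class n) t1)") (auto simp: filter_empty_conv)
  moreover have "f \<noteq> ?c"
  proof -
    have "f \<in> set (pair_projection n ?c ?e t1)"
      by (simp add: f)
    then show ?thesis
      using first(2) unfolding pair_projection_def by auto
  qed
  ultimately show False
    unfolding pair_projection_def by simp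
qed

lemma same_projections_remove_first:
  assumes same: "same_projections n (y # ys) (t1 @ z # t2)" and z: "vsb_class n z = vsb_class n y"
    and indep: "\<forall>d \<in> set t1. independent n (vsb_class n y) (vsb_class n d)"
  shows "same_projections n ys (t1 @ t2)"
  unfolding same_projections_def
proof (intro allI impI)
  fix a b
  let ?c = "vsb_class n y"
  assume ab: "dependent n a b"
  then have eq: "pair_projection n a b (y # ys) = pair_projection n a b (t1 @ z # t2)"
    using same unfolding same_projections_def by blast
  show "pair_projection n a b ys = pair_projection n a b (t1 @ t2)"
  proof (cases "?c = a \<or> ?c = b")
    case True
    have "vsb_class n d \<noteq> a \<and> vsb_class n d \<noteq> b" if "d \<in> set t1" for d
    proof -
      have "independent n ?c (vsb_class n d)" "independent n (vsb_class n d) ?c"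
        using indep that independent_sym by auto
      moreover have "?c \<noteq> vsb_class n d"
        using calculation unfolding independent_def by blast
      ultimately show ?thesis
        using True ab unfolding dependent_def by auto
    qed
    then have "pair_projection n a b t1 = []"
      unfolding pair_projection_def by (auto simp: filter_empty_conv)
    then have "pair_projection n a b (t1 @ z # t2) = ?c # pair_projection n a b t2"
      "pair_projection n a b (y # ys) = ?c # pair_projection n a b ys"
      "pair_projection n a b (t1 @ t2) = pair_projection n a b t2"
      using True z unfolding pair_projection_def by auto
    then show ?thesis
      using eq by simp
  next
    case False
    then show ?thesis
      using eq z unfolding pair_projection_def by auto
  qed
qed

lemma vsb_eq_concat_if_same_projections:
  assumes "\<forall>t \<in> set ts. set t \<subseteq> vsb_alph n" "\<forall>t \<in> set ts'. set t \<subseteq> vsb_alph n"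
    and "same_projections n ts ts'"
  shows "vsb_eq n (concat ts) (concat ts')"
  using assms
proof (induction ts arbitrary: ts')
  case Nil
  then show ?case using same_projections_Nil[of n ts'] by (simp add: vsb_eq_refl)
next
  case (Cons y ys)
  let ?c = "vsb_class n y"
  have "pair_projection n ?c ?c ts' = pair_projection n ?c ?c (y # ys)"
    using Cons.prems(3) unfolding same_projections_def dependent_def by simp
  also have "\<dots> = ?c # pair_projection n ?c ?c ys"
    by (simp add: pair_projection_def)
  finally have "?c \<in> set (pair_projection n ?c ?c ts')"
    by simp
  then have "\<exists>z \<in> set ts'. vsb_class n z = ?c"
    unfolding pair_projection_def by auto
  then obtain t1 z t2 where ts': "ts' = t1 @ z # t2" and z: "vsb_class n z = ?c"
    and before: "\<forall>d \<in> set t1. vsb_class n d \<noteq> ?c"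
    using split_list_first_prop[of ts' "\<lambda>z. vsb_class n z = ?c"] by blast
  have alph: "set y \<subseteq> vsb_alph n" "set z \<subseteq> vsb_alph n"
    "\<forall>d \<in> set t1. set d \<subseteq> vsb_alph n" "\<forall>d \<in> set t2. set d \<subseteq> vsb_alph n"
    "set (concat t2) \<subseteq> vsb_alph n"
    using Cons.prems(1,2) ts' by auto
  have indep: "\<forall>d \<in> set t1. independent n ?c (vsb_class n d)"
    using independent_if_before_first Cons.prems(3) z before unfolding ts' by blast
  have "vsb_eq n (concat ys) (concat (t1 @ t2))"
    by (rule Cons.IH)
      (use same_projections_remove_first[OF Cons.prems(3)[unfolded ts'] z indep]
        Cons.prems(1) alph(3,4) in auto)
  then have "vsb_eq n (y @ concat ys) (z @ concat t1 @ concat t2)"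
    using vsb_eq_append[OF vsb_eq_if_vsb_class_eq[OF z[symmetric] alph(1)]] by simp
  also have "vsb_eq n (z @ concat t1 @ concat t2) (concat t1 @ z @ concat t2)"
    using vsb_eq_context[OF vsb_eq_sym[OF vsb_eq_commute_concat[of z n t1]], of "[]" "concat t2"]
      alph indep z by simp
  finally show ?case
    using ts' by simp
qed

theorem mainTheorem1:
  fixes n :: nat and u w :: "mgen list"
  assumes "n \<ge> 2"
    and "set u \<subseteq> vsb_alph n" and "set w \<subseteq> vsb_alph n"
    and "vsg_eq n (phi u) (phi w)"
  shows "vsb_eq n u w"
proof -
  obtain \<beta> ts \<beta>' ts' where u: "split_word u = (\<beta>, ts)" and w: "split_word w = (\<beta>', ts')"
    by fastforce
  have "admissible n ([], \<lambda>a b. [])"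
    by (simp add: admissible_def freely_reduced_def)
  then have "state_eq n (run n (phi u) ([], \<lambda>a b. [])) (run n (phi w) ([], \<lambda>a b. []))"
    by (rule state_eq_run_if_vsg_eq[OF assms(4)])
  then have \<beta>: "vsb_eq n \<beta> \<beta>'" and "positive_table n ts = positive_table n ts'"
    by (simp_all add: run_phi u w state_eq_def)
  then have "same_projections n ts ts'"
    by (simp add: same_projections_if_positive_table_eq)
  then have "vsb_eq n (concat ts) (concat ts')"
    using vsb_eq_concat_if_same_projections split_word_correct[OF assms(2)] split_word_correct[OF assms(3)]
    unfolding u w by simp
  then have "vsb_eq n (concat ts @ \<beta>) (concat ts' @ \<beta>')"
    using \<beta> by (rule vsb_eq_append)
  then show ?thesis
    using split_word_correct[OF assms(2)] split_word_correct[OF assms(3)] vsb_eq_sym vsb_eq_trans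
    unfolding u w by (metis fst_conv snd_conv)
qed

end
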